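(* Let $n$ be a prime, let $\alpha$ be a primitive element of $\mathbb{F}_{2^n}$, identify $\mathbb{F}_2^n$ with $\mathbb{F}_{2^n}$ as $\mathbb{F}_2$-vector spaces, and let $k\ge 2$. If there exist $\frac{2^n-2}{(2^k-1)(2^k-2)}$ pairwise disjoint complete $k$-dimensional subspaces of $\mathbb{F}_2^n$, then there exists a Steiner structure $\mathbb{S}_2[2,k,n]$.
   Context: For a $k$-dimensional subspace $X=\{0,\alpha^{i_1},\dots,\alpha^{i_{2^k-1}}\}$ of $\mathbb{F}_2^n$ (exponents in $\mathbb{Z}_{2^n-1}$), its difference set is $\Delta(X)=\{i_r-i_s \bmod (2^n-1): 1\le r,s\le 2^k-1,\ r\ne s\}$. $X$ is complete if $|\Delta(X)|=(2^k-1)(2^k-2)$. Two complete subspaces $X,Y$ are disjoint complete if $\Delta(X)\cap\Delta(Y)=\varnothing$. A Steiner structure $\mathbb{S}_2[2,k,n]$ is a set of $k$-dimensional subspaces of $\mathbb{F}_2^n$ such that each $2$-dimensional subspace of $\mathbb{F}_2^n$ is contained in exactly one of them. *)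

theory Defs
  imports Complex_Main "HOL-Computational_Algebra.Primes" "HOL-Library.Cardinality"
begin

text \<open>We work in a finite field 'a with 2^n elements (a model of F_{2^n}), viewed as an
  F_2-vector space.  Since the only scalars of F_2 are 0 and 1, an F_2-subspace is exactly a
  subset containing 0 and closed under addition; an F_2-subspace of dimension k has exactly
  2^k elements.\<close>

definition f2_subspace :: "'a::field set \<Rightarrow> bool" where
  "f2_subspace V \<longleftrightarrow> 0 \<in> V \<and> (\<forall>x\<in>V. \<forall>y\<in>V. x + y \<in> V)
      \<and> (\<forall>c\<in>{0::'a, 1}. \<forall>x\<in>V. c * x \<in> V)"

definition f2_subspace_dim :: "nat \<Rightarrow> 'a::field set \<Rightarrow> bool" where
  "f2_subspace_dim k V \<longleftrightarrow> f2_subspace V \<and> finite V \<and> card V = 2 ^ k"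

definition primitive_elem :: "'a::field \<Rightarrow> bool" where
  "primitive_elem a \<longleftrightarrow> a \<noteq> 0 \<and> (\<forall>x. x \<noteq> 0 \<longrightarrow> (\<exists>i::nat. a ^ i = x))"

definition dlog :: "'a::{field,finite} \<Rightarrow> 'a \<Rightarrow> nat" where
  "dlog a x = (THE i. i < CARD('a) - 1 \<and> a ^ i = x)"

definition diff_set :: "'a::{field,finite} \<Rightarrow> 'a set \<Rightarrow> int set" where
  "diff_set a X = {(int (dlog a x) - int (dlog a y)) mod (int CARD('a) - 1) | x y.
       x \<in> X - {0} \<and> y \<in> X - {0} \<and> x \<noteq> y}"

definition complete_subspace :: "'a::{field,finite} \<Rightarrow> nat \<Rightarrow> 'a set \<Rightarrow> bool" where
  "complete_subspace a k X \<longleftrightarrow> f2_subspace_dim k X \<and>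
     card (diff_set a X) = (2 ^ k - 1) * (2 ^ k - 2)"

definition steiner_structure :: "nat \<Rightarrow> 'a::field set set \<Rightarrow> bool" where
  "steiner_structure k S \<longleftrightarrow> (\<forall>V\<in>S. f2_subspace_dim k V) \<and>
     (\<forall>L. f2_subspace_dim 2 L \<longrightarrow> (\<exists>!V. V \<in> S \<and> L \<subseteq> V))"

end

theory Submission
  imports Defs "HOL-Library.Disjoint_Sets"
begin

text \<open>Since \<open>dlog\<close> turns quotients into differences of exponents, the difference set of
  \<open>X\<close> is the discrete logarithm of its ratio set \<open>{x / y | x, y \<in> X - {0}, x \<noteq> y}\<close>.
  Completeness says that every ratio arises from a single pair, and the counting hypothesis
  together with disjointness says that the ratio sets of the given subspaces partition the
  field minus \<open>{0, 1}\<close>. Take all multiples \<open>c X\<close>, \<open>c \<noteq> 0\<close>. A 2-dimensional subspace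
  \<open>{0, u, v, u + v}\<close> lies in \<open>c X\<close> iff \<open>(u / c, v / c)\<close> is a pair of \<open>X\<close> of ratio \<open>u / v\<close>;
  as this ratio occurs in exactly one \<open>X\<close>, and there for exactly one pair, the subspace
  lies in exactly one \<open>c X\<close>.\<close>

lemma two_le_card_field: "2 \<le> CARD('a::{field,finite})"
proof -
  have "card {0::'a, 1} \<le> CARD('a)" by (rule card_mono) auto
  then show ?thesis by simp
qed

lemma power_card_minus_one_eq_one:
  fixes x :: "'a::{field,finite}"
  assumes "x \<noteq> 0"
  shows "x ^ (CARD('a) - 1) = 1"
proof -
  have card_units: "card (UNIV - {0::'a}) = CARD('a) - 1"
    by (simp add: card_Diff_singleton)
  have "x ^ (CARD('a) - 1) * (\<Prod>y\<in>UNIV - {0}. y) = (\<Prod>y\<in>UNIV - {0}. x * y)"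
    by (simp add: prod.distrib card_units)
  also have "\<dots> = (\<Prod>y\<in>UNIV - {0}. y)"
    by (rule prod.reindex_bij_witness[of _ "\<lambda>y. y / x" "\<lambda>y. x * y"]) (use assms in auto)
  finally show ?thesis by simp
qed

lemma power_mod_card_minus_one:
  fixes x :: "'a::{field,finite}"
  assumes "x \<noteq> 0"
  shows "x ^ i = x ^ (i mod (CARD('a) - 1))"
proof -
  have "x ^ i = (x ^ (CARD('a) - 1)) ^ (i div (CARD('a) - 1)) * x ^ (i mod (CARD('a) - 1))"
    by (simp flip: power_mult power_add)
  then show ?thesis using power_card_minus_one_eq_one[OF assms] by simp
qed

lemma bij_betw_power_primitive_elem:
  fixes a :: "'a::{field,finite}"
  assumes "primitive_elem a"
  shows "bij_betw (\<lambda>i. a ^ i) {..<CARD('a) - 1} (UNIV - {0})"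
proof -
  have a: "a \<noteq> 0" using assms by (simp add: primitive_elem_def)
  have M: "0 < CARD('a) - 1" using two_le_card_field[where 'a='a] by simp
  have image: "(\<lambda>i. a ^ i) ` {..<CARD('a) - 1} = UNIV - {0}"
  proof (intro equalityI subsetI)
    fix x :: 'a
    assume "x \<in> UNIV - {0}"
    then obtain i where "a ^ i = x" using assms by (auto simp: primitive_elem_def)
    then show "x \<in> (\<lambda>i. a ^ i) ` {..<CARD('a) - 1}"
      using power_mod_card_minus_one[OF a, of i] M by auto
  qed (use a in auto)
  moreover have "card {..<CARD('a) - 1} = card (UNIV - {0::'a})"
    by (simp add: card_Diff_singleton)
  ultimately show ?thesis
    by (auto simp: bij_betw_def intro: eq_card_imp_inj_on)
qed

lemma power_eq_power_iff_primitive_elem: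
  fixes a :: "'a::{field,finite}"
  assumes "primitive_elem a"
  shows "a ^ i = a ^ j \<longleftrightarrow> i mod (CARD('a) - 1) = j mod (CARD('a) - 1)"
proof -
  have a: "a \<noteq> 0" using assms by (simp add: primitive_elem_def)
  have M: "0 < CARD('a) - 1" using two_le_card_field[where 'a='a] by simp
  have "inj_on (\<lambda>i. a ^ i) {..<CARD('a) - 1}"
    using bij_betw_power_primitive_elem[OF assms] by (simp add: bij_betw_def)
  then show ?thesis
    using power_mod_card_minus_one[OF a, of i] power_mod_card_minus_one[OF a, of j] M
    by (auto dest: inj_onD)
qed

lemma dlog_eq_the_inv_into:
  fixes a :: "'a::{field,finite}"
  shows "dlog a = the_inv_into {..<CARD('a) - 1} (\<lambda>i. a ^ i)"
  by (simp add: fun_eq_iff dlog_def the_inv_into_def)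

lemma bij_betw_dlog:
  fixes a :: "'a::{field,finite}"
  assumes "primitive_elem a"
  shows "bij_betw (dlog a) (UNIV - {0}) {..<CARD('a) - 1}"
  unfolding dlog_eq_the_inv_into
  by (rule bij_betw_the_inv_into[OF bij_betw_power_primitive_elem[OF assms]])

lemma power_dlog:
  fixes a :: "'a::{field,finite}"
  assumes "primitive_elem a" "x \<noteq> 0"
  shows "a ^ dlog a x = x"
  unfolding dlog_eq_the_inv_into
  by (rule f_the_inv_into_f_bij_betw[OF bij_betw_power_primitive_elem[OF assms(1)]])
     (use assms(2) in auto)

lemma dlog_divide:
  fixes a :: "'a::{field,finite}"
  assumes a: "primitive_elem a" and "x \<noteq> 0" "y \<noteq> 0"
  shows "int (dlog a (x / y)) = (int (dlog a x) - int (dlog a y)) mod (int CARD('a) - 1)"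
proof -
  define M where "M = CARD('a) - 1"
  have iM: "int CARD('a) - 1 = int M" using two_le_card_field[where 'a='a] M_def by simp
  have lt: "dlog a z < M" if "z \<noteq> 0" for z
    using bij_betw_dlog[OF a] that M_def by (auto dest: bij_betw_apply)
  have "a ^ (dlog a (x / y) + dlog a y) = a ^ dlog a x"
    using assms by (simp add: power_add power_dlog)
  then have "(dlog a (x / y) + dlog a y) mod M = dlog a x mod M"
    using power_eq_power_iff_primitive_elem[OF a] M_def by simp
  then have "(int (dlog a (x / y)) + int (dlog a y)) mod int M = int (dlog a x) mod int M"
    by (metis of_nat_add of_nat_mod)
  then have "int (dlog a (x / y)) mod int M = (int (dlog a x) - int (dlog a y)) mod int M"
    by (simp add: mod_eq_dvd_iff algebra_simps)
  then show ?thesis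
    using lt[of "x / y"] assms iM by simp
qed

definition distinct_nonzero_pairs :: "'a::zero set \<Rightarrow> ('a \<times> 'a) set" where
  "distinct_nonzero_pairs X = {(x, y). x \<in> X - {0} \<and> y \<in> X - {0} \<and> x \<noteq> y}"

definition ratio_set :: "'a::field set \<Rightarrow> 'a set" where
  "ratio_set X = (\<lambda>(x, y). x / y) ` distinct_nonzero_pairs X"

lemma card_distinct_nonzero_pairs:
  assumes "finite X" "0 \<in> X"
  shows "card (distinct_nonzero_pairs X) = (card X - 1) * (card X - 2)"
proof -
  have "distinct_nonzero_pairs X = (SIGMA x:X - {0}. X - {0} - {x})"
    by (auto simp: distinct_nonzero_pairs_def)
  then have "card (distinct_nonzero_pairs X) = (\<Sum>x\<in>X - {0}. card (X - {0} - {x}))"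
    using assms by simp
  also have "\<dots> = (\<Sum>x\<in>X - {0}. card X - 2)"
    using assms by (intro sum.cong) (auto simp: card_Diff_singleton)
  finally show ?thesis
    using assms by (simp add: card_Diff_singleton)
qed

lemma ratio_set_subset: "ratio_set X \<subseteq> UNIV - {0, 1}"
  by (auto simp: ratio_set_def distinct_nonzero_pairs_def)

lemma diff_set_eq_dlog_image:
  fixes a :: "'a::{field,finite}"
  assumes "primitive_elem a"
  shows "diff_set a X = (\<lambda>r. int (dlog a r)) ` ratio_set X"
proof -
  have "diff_set a X = (\<lambda>(x, y). (int (dlog a x) - int (dlog a y)) mod (int CARD('a) - 1)) `
      distinct_nonzero_pairs X"
    by (auto simp: diff_set_def distinct_nonzero_pairs_def)
  also have "\<dots> = (\<lambda>(x, y). int (dlog a (x / y))) ` distinct_nonzero_pairs X"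
    by (rule image_cong) (auto simp: distinct_nonzero_pairs_def dlog_divide[OF assms])
  finally show ?thesis
    by (simp add: ratio_set_def image_image case_prod_beta)
qed

lemma card_diff_set:
  fixes a :: "'a::{field,finite}"
  assumes "primitive_elem a"
  shows "card (diff_set a X) = card (ratio_set X)"
proof -
  have "inj_on (\<lambda>r. int (dlog a r)) (UNIV - {0})"
    using bij_betw_dlog[OF assms] by (auto simp: bij_betw_def inj_on_def)
  then have "inj_on (\<lambda>r. int (dlog a r)) (ratio_set X)"
    by (rule inj_on_subset) (use ratio_set_subset in blast)
  then show ?thesis
    by (simp add: diff_set_eq_dlog_image[OF assms] card_image)
qed

lemma disjoint_ratio_set_if_disjoint_diff_set:
  fixes a :: "'a::{field,finite}"
  assumes "primitive_elem a" "diff_set a X \<inter> diff_set a Y = {}"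
  shows "ratio_set X \<inter> ratio_set Y = {}"
  using assms by (auto simp: diff_set_eq_dlog_image)

lemma inj_on_ratio_if_complete_subspace:
  fixes a :: "'a::{field,finite}"
  assumes "primitive_elem a" "complete_subspace a k X"
  shows "inj_on (\<lambda>(x, y). x / y) (distinct_nonzero_pairs X)"
proof (rule eq_card_imp_inj_on)
  have "finite X" "0 \<in> X" "card X = 2 ^ k"
    using assms(2) by (auto simp: complete_subspace_def f2_subspace_dim_def f2_subspace_def)
  then show "card ((\<lambda>(x, y). x / y) ` distinct_nonzero_pairs X) = card (distinct_nonzero_pairs X)"
    using assms by (simp add: complete_subspace_def card_diff_set card_distinct_nonzero_pairs
        flip: ratio_set_def)
qed (simp add: distinct_nonzero_pairs_def)

lemma Union_ratio_set_eq:
  fixes F :: "'a::{field,finite} set set"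
  assumes "disjoint_family_on ratio_set F" "\<And>X. X \<in> F \<Longrightarrow> card (ratio_set X) = N"
    and "card F * N = CARD('a) - 2"
  shows "(\<Union>X\<in>F. ratio_set X) = UNIV - {0, 1}"
proof (rule card_subset_eq)
  have "card (\<Union>X\<in>F. ratio_set X) = (\<Sum>X\<in>F. card (ratio_set X))"
    using assms(1) by (intro card_UN_disjoint) (auto simp: disjoint_family_on_def)
  also have "\<dots> = card (UNIV - {0, 1::'a})"
    using assms(2,3) by (simp add: card_Diff_subset)
  finally show "card (\<Union>X\<in>F. ratio_set X) = card (UNIV - {0, 1::'a})" .
qed (use ratio_set_subset in auto)

lemma f2_subspace_dim_scale:
  fixes c :: "'a::field"
  assumes "f2_subspace_dim k X" "c \<noteq> 0"
  shows "f2_subspace_dim k ((*) c ` X)"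
proof -
  have "f2_subspace ((*) c ` X)"
    using assms(1) unfolding f2_subspace_dim_def f2_subspace_def
    by (auto simp: image_iff simp flip: distrib_left)
  moreover have "card ((*) c ` X) = card X"
    using assms(2) by (simp add: card_image inj_on_def)
  ultimately show ?thesis
    using assms(1) by (simp add: f2_subspace_dim_def)
qed

lemma f2_subspace_dim_2_cases:
  fixes L :: "'a::field set"
  assumes "f2_subspace_dim 2 L"
  obtains u v where "u \<noteq> 0" "v \<noteq> 0" "u \<noteq> v" "L = {0, u, v, u + v}"
proof -
  have L0: "0 \<in> L" and add: "\<And>x y. x \<in> L \<Longrightarrow> y \<in> L \<Longrightarrow> x + y \<in> L"
    and fin: "finite L" and card: "card L = 4"
    using assms by (auto simp: f2_subspace_dim_def f2_subspace_def)
  then have "card (L - {0}) = 3" by (simp add: card_Diff_singleton)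
  then obtain x y z where xyz: "L - {0} = {x, y, z}" "x \<noteq> y" "y \<noteq> z" "x \<noteq> z"
    by (auto simp: card_3_iff)
  \<comment> \<open>The field need not have characteristic 2, so \<open>u + v \<noteq> 0\<close> has to be arranged.\<close>
  obtain u v where uv: "u \<in> L - {0}" "v \<in> L - {0}" "u \<noteq> v" "u + v \<noteq> 0"
  proof (cases "x + y = 0")
    case True
    then have "x + z \<noteq> 0" using xyz by (metis add_left_cancel)
    then show ?thesis using xyz that[of x z] by blast
  next
    case False
    then show ?thesis using xyz that[of x y] by blast
  qed
  have "{0, u, v, u + v} \<subseteq> L" "card {0, u, v, u + v} = 4"
    using uv L0 add by auto
  then have "L = {0, u, v, u + v}"
    using fin card by (metis card_subset_eq)
  then show ?thesis
    using that uv by blast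
qed

lemma ratio_set_determines_pair:
  fixes F :: "'a::field set set"
  assumes inj: "\<And>X. X \<in> F \<Longrightarrow> inj_on (\<lambda>(x, y). x / y) (distinct_nonzero_pairs X)"
    and disj: "disjoint_family_on ratio_set F"
    and "X \<in> F" "Y \<in> F" "p \<in> distinct_nonzero_pairs X" "p' \<in> distinct_nonzero_pairs Y"
    and "fst p / snd p = fst p' / snd p'"
  shows "X = Y \<and> p = p'"
proof -
  have "fst p / snd p \<in> ratio_set X \<inter> ratio_set Y"
    using assms(5-7) unfolding ratio_set_def by (auto intro!: rev_image_eqI simp: case_prod_beta)
  then have "X = Y"
    using disj assms(3,4) by (auto simp: disjoint_family_on_def)
  then show ?thesis
    using inj_onD[OF inj[OF assms(3)], of p p'] assms(5-7) by (auto simp: case_prod_beta)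
qed

lemma steiner_structure_scalings:
  fixes F :: "'a::field set set"
  assumes dim: "\<And>X. X \<in> F \<Longrightarrow> f2_subspace_dim k X"
    and inj: "\<And>X. X \<in> F \<Longrightarrow> inj_on (\<lambda>(x, y). x / y) (distinct_nonzero_pairs X)"
    and disj: "disjoint_family_on ratio_set F"
    and cover: "(\<Union>X\<in>F. ratio_set X) = UNIV - {0, 1}"
  shows "steiner_structure k {(*) c ` X | c X. c \<noteq> 0 \<and> X \<in> F}"
    (is "steiner_structure k ?S")
proof -
  have unique: "c = c' \<and> X = X'"
    if "X \<in> F" "X' \<in> F" "c \<noteq> 0" "c' \<noteq> 0" "u \<noteq> 0" "v \<noteq> 0" "u \<noteq> v"
      and "{u, v} \<subseteq> (*) c ` X" "{u, v} \<subseteq> (*) c' ` X'" for c c' X X' u v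
  proof -
    have unscale: "t / d \<in> Z" if "t \<in> (*) d ` Z" "d \<noteq> 0" for t d and Z :: "'a set"
      using that by auto
    have "(u / c, v / c) \<in> distinct_nonzero_pairs X" "(u / c', v / c') \<in> distinct_nonzero_pairs X'"
      using that unscale[of _ c X] unscale[of _ c' X'] by (auto simp: distinct_nonzero_pairs_def)
    moreover have "(u / c) / (v / c) = (u / c') / (v / c')"
      using that by simp
    ultimately have "X = X' \<and> u / c = u / c'"
      using ratio_set_determines_pair[OF inj disj \<open>X \<in> F\<close> \<open>X' \<in> F\<close>] by fastforce
    then show ?thesis
      using that by (simp add: divide_cancel_left)
  qed
  have exists: "\<exists>V\<in>?S. {0, u, v, u + v} \<subseteq> V" if "u \<noteq> 0" "v \<noteq> 0" "u \<noteq> v" for u v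
  proof -
    have "u / v \<in> UNIV - {0, 1}" using that by simp
    then obtain X x y where X: "X \<in> F" "(x, y) \<in> distinct_nonzero_pairs X" "u / v = x / y"
      unfolding cover[symmetric] ratio_set_def by auto
    define c where "c = u / x"
    have c: "c \<noteq> 0" "c * x = u" "c * y = v"
      using X that by (auto simp: c_def distinct_nonzero_pairs_def field_simps)
    have "{0, x, y, x + y} \<subseteq> X"
      using dim[OF X(1)] X(2)
      by (auto simp: f2_subspace_dim_def f2_subspace_def distinct_nonzero_pairs_def)
    moreover have "{0, u, v, u + v} = (*) c ` {0, x, y, x + y}"
      using c by (simp add: distrib_left)
    ultimately have "{0, u, v, u + v} \<subseteq> (*) c ` X"
      by (simp only: image_mono)
    moreover have "(*) c ` X \<in> ?S"
      using X(1) c(1) by blast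
    ultimately show ?thesis
      by blast
  qed
  show ?thesis
    unfolding steiner_structure_def
  proof (intro conjI ballI allI impI)
    show "f2_subspace_dim k V" if "V \<in> ?S" for V
      using that dim f2_subspace_dim_scale by blast
    fix L :: "'a set"
    assume "f2_subspace_dim 2 L"
    then obtain u v where uv: "u \<noteq> 0" "v \<noteq> 0" "u \<noteq> v" and L: "L = {0, u, v, u + v}"
      by (rule f2_subspace_dim_2_cases)
    obtain V where V: "V \<in> ?S" "L \<subseteq> V"
      using exists[OF uv] unfolding L by blast
    show "\<exists>!V. V \<in> ?S \<and> L \<subseteq> V"
    proof (rule ex1I[of _ V])
      fix W
      assume W: "W \<in> ?S \<and> L \<subseteq> W"
      obtain c X where "V = (*) c ` X" "c \<noteq> 0" "X \<in> F" using V(1) by blast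
      moreover obtain c' X' where "W = (*) c' ` X'" "c' \<noteq> 0" "X' \<in> F" using W by blast
      ultimately show "W = V"
        using unique[of X X' c c' u v] uv V(2) W unfolding L by auto
    qed (use V in blast)
  qed
qed

theorem theorem1:
  fixes a :: "'a::{field,finite}" and n k :: nat
  assumes "prime n"
    and "CARD('a) = 2 ^ n"
    and "primitive_elem a"
    and "k \<ge> 2"
    and "\<exists>F :: 'a set set.
           real (card F) = (2 ^ n - 2) / ((2 ^ k - 1) * (2 ^ k - 2) :: real) \<and>
           (\<forall>X\<in>F. complete_subspace a k X) \<and>
           (\<forall>X\<in>F. \<forall>Y\<in>F. X \<noteq> Y \<longrightarrow> diff_set a X \<inter> diff_set a Y = {})"
  shows "\<exists>S :: 'a set set. steiner_structure k S"
proof -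
  obtain F :: "'a set set"
    where card_F: "real (card F) = (2 ^ n - 2) / ((2 ^ k - 1) * (2 ^ k - 2) :: real)"
      and complete: "\<And>X. X \<in> F \<Longrightarrow> complete_subspace a k X"
      and disjoint: "\<forall>X\<in>F. \<forall>Y\<in>F. X \<noteq> Y \<longrightarrow> diff_set a X \<inter> diff_set a Y = {}"
    using assms(5) by blast
  define N where "N = (2 ^ k - 1) * (2 ^ k - 2 :: nat)"
  have "(4::nat) \<le> 2 ^ k"
    using power_increasing[OF assms(4), of "2::nat"] by simp
  then have N: "real N = (2 ^ k - 1) * (2 ^ k - 2)" "N > 0"
    by (simp_all add: N_def of_nat_diff)
  then have "real (card F) = (2 ^ n - 2) / real N"
    using card_F by (simp only: N(1))
  then have "real (card F) * real N = 2 ^ n - 2"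
    using N(2) by simp
  then have "real (card F * N) = real (CARD('a) - 2)"
    using assms(2) two_le_card_field[where 'a='a] by (simp add: of_nat_diff)
  then have "card F * N = CARD('a) - 2"
    by (simp only: of_nat_eq_iff)
  moreover have "card (ratio_set X) = N" if "X \<in> F" for X
    using complete[OF that] by (simp add: complete_subspace_def N_def card_diff_set[OF assms(3)])
  moreover have disjoint_ratio: "disjoint_family_on ratio_set F"
    using disjoint disjoint_ratio_set_if_disjoint_diff_set[OF assms(3)]
    by (auto simp: disjoint_family_on_def)
  ultimately have "(\<Union>X\<in>F. ratio_set X) = UNIV - {0, 1}"
    by (intro Union_ratio_set_eq) auto
  then have "steiner_structure k {(*) c ` X | c X. c \<noteq> 0 \<and> X \<in> F}"
    using complete inj_on_ratio_if_complete_subspace[OF assms(3) complete] disjoint_ratio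
    by (intro steiner_structure_scalings) (auto simp: complete_subspace_def)
  then show ?thesis ..
qed

end
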